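(* Let $f\in\mathbb{R}[X_1,\dots,X_n]$ be a non-constant polynomial of degree $2d$ and let $r\in\mathbb{R}$. Suppose there exist nonnegative real numbers $a_{\alpha,i}$, $\alpha\in\Delta$, $i=1,\dots,n$, with $a_{\alpha,i}=0$ if and only if $\alpha_i=0$, such that, writing $a_\alpha=(a_{\alpha,1},\dots,a_{\alpha,n})$, (1) $(2d)^{2d}a_{\alpha}^{\alpha}=|f_{\alpha}|^{2d}\alpha^{\alpha}$ for each $\alpha\in\Delta$ with $|\alpha|=2d$; (2) $f_{2d,i}\ge\sum_{\alpha\in\Delta}a_{\alpha,i}$ for $i=1,\dots,n$; and (3) $f_0-r\ge\sum_{\alpha\in\Delta^{<2d}}(2d-|\alpha|)\left[\frac{|f_{\alpha}|^{2d}\alpha^{\alpha}}{(2d)^{2d}a_{\alpha}^{\alpha}}\right]^{\frac{1}{2d-|\alpha|}}$, where $\Delta^{<2d}:=\{\alpha\in\Delta:|\alpha|<2d\}$. Then $f-r$ is SOBS.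
   Context: $\mathbb{N}=\{0,1,2,\dots\}$. For $\alpha\in\mathbb{N}^n$ write $\underline{X}^\alpha=X_1^{\alpha_1}\cdots X_n^{\alpha_n}$, $|\alpha|=\sum_i\alpha_i$, and for $a\in\mathbb{R}^n$, $a^\alpha=\prod_i a_i^{\alpha_i}$ with $0^0=1$ (so $\alpha^\alpha=\prod_i\alpha_i^{\alpha_i}$). For $f=\sum_\alpha f_\alpha\underline{X}^\alpha$ of degree $2d$: $f_0$ is the constant term, $f_{2d,i}$ is the coefficient of $X_i^{2d}$, $\Omega=\{\alpha: f_\alpha\ne0\}\setminus\{\underline{0},2d\epsilon_1,\dots,2d\epsilon_n\}$ ($\epsilon_i$ the standard unit vectors), and $\Delta=\{\alpha\in\Omega:\ f_\alpha<0\text{ or }\alpha_i\text{ odd for some }i\}$. SOBS means a finite sum of squares of polynomials of the form $a\underline{X}^\alpha-b\underline{X}^\beta$, $a,b\in\mathbb{R}$. *)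

theory Defs
  imports Complex_Main "HOL-Library.Poly_Mapping"
begin

(* Real multivariate polynomials are represented as finitely supported maps from
exponent vectors (nat \<Rightarrow>\<^sub>0 nat) to real coefficients; the variable X_i (i = 1..n)
corresponds to index i-1 \<in> {..<n}. *)

type_synonym mpoly = "(nat \<Rightarrow>\<^sub>0 nat) \<Rightarrow>\<^sub>0 real"

definition in_vars :: "nat \<Rightarrow> mpoly \<Rightarrow> bool" where
  "in_vars n f \<longleftrightarrow> (\<forall>\<alpha>\<in>Poly_Mapping.keys f. Poly_Mapping.keys (\<alpha>::nat \<Rightarrow>\<^sub>0 nat) \<subseteq> {..<n})"

definition tdeg :: "(nat \<Rightarrow>\<^sub>0 nat) \<Rightarrow> nat" where
  "tdeg \<alpha> = (\<Sum>i\<in>Poly_Mapping.keys \<alpha>. Poly_Mapping.lookup \<alpha> i)"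

definition poly_deg :: "mpoly \<Rightarrow> nat" where
  "poly_deg f = (if Poly_Mapping.keys f = {} then 0 else Max (tdeg ` Poly_Mapping.keys f))"

definition mono :: "real \<Rightarrow> (nat \<Rightarrow>\<^sub>0 nat) \<Rightarrow> mpoly" where
  "mono a \<alpha> = Poly_Mapping.single \<alpha> a"

definition coef :: "mpoly \<Rightarrow> (nat \<Rightarrow>\<^sub>0 nat) \<Rightarrow> real" where
  "coef f \<alpha> = Poly_Mapping.lookup f \<alpha>"

definition pure :: "nat \<Rightarrow> nat \<Rightarrow> (nat \<Rightarrow>\<^sub>0 nat)" where
  "pure k i = Poly_Mapping.single i k"

definition Omega :: "nat \<Rightarrow> nat \<Rightarrow> mpoly \<Rightarrow> (nat \<Rightarrow>\<^sub>0 nat) set" where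
  "Omega n d f = {\<alpha>\<in>Poly_Mapping.keys f. \<alpha> \<noteq> 0 \<and> (\<forall>i<n. \<alpha> \<noteq> pure (2*d) i)}"

definition Delta :: "nat \<Rightarrow> nat \<Rightarrow> mpoly \<Rightarrow> (nat \<Rightarrow>\<^sub>0 nat) set" where
  "Delta n d f = {\<alpha>\<in>Omega n d f. coef f \<alpha> < 0 \<or> (\<exists>i<n. odd (Poly_Mapping.lookup \<alpha> i))}"

definition vpow :: "nat \<Rightarrow> (nat \<Rightarrow> real) \<Rightarrow> (nat \<Rightarrow>\<^sub>0 nat) \<Rightarrow> real" where
  "vpow n a \<alpha> = (\<Prod>i<n. a i ^ Poly_Mapping.lookup \<alpha> i)"

definition SOBS :: "nat \<Rightarrow> mpoly \<Rightarrow> bool" where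
  "SOBS n g \<longleftrightarrow> (\<exists>L :: (real \<times> (nat \<Rightarrow>\<^sub>0 nat) \<times> real \<times> (nat \<Rightarrow>\<^sub>0 nat)) list.
      (\<forall>(a,\<alpha>,b,\<beta>)\<in>set L. Poly_Mapping.keys \<alpha> \<subseteq> {..<n} \<and> Poly_Mapping.keys \<beta> \<subseteq> {..<n}) \<and>
      g = (\<Sum>(a,\<alpha>,b,\<beta>)\<leftarrow>L. (mono a \<alpha> - mono b \<beta>) * (mono a \<alpha> - mono b \<beta>)))"

end

theory Submission
  imports Defs
begin

(*
  f - r is split, exponent by exponent, into a remainder and, for each \<alpha> \<in> \<Delta>, a circuit polynomial
  \<Sum>_i a_{\<alpha>,i} X_i^{2d} + b_\<alpha> + f_\<alpha> X^\<alpha>, where b_\<alpha> is the \<alpha>-summand of condition (3).  By (2) and (3)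
  the remainder is a nonnegative combination of monomials with even exponents.

  A circuit polynomial is Hurwitz's form
    F_k(e; x) = \<Sum>_i e_i x_i^k - k \<Prod>_i x_i^{e_i}      (\<Sum>_i e_i = k)
  for k = 2d at the monomials x_i = \<lambda>_i X_i, \<lambda>_i^{2d} = a_{\<alpha>,i} / \<alpha>_i, together with one constant
  x = t of weight 2d - |\<alpha>|.  The constant t is chosen so that the coefficient of X^\<alpha> becomes -|f_\<alpha>|;
  its contribution (2d - |\<alpha>|) t^{2d} is then exactly b_\<alpha>.  For |\<alpha>| = 2d there is no t, and condition
  (1) makes the coefficient right.  If f_\<alpha> > 0, some \<alpha>_j is odd and negating \<lambda>_j fixes the sign.

  Hurwitz's form at monomials is a sum of squares of binomials.  Splitting e into two halves u, v of
  weight d gives F_{2d}(e; x) = F_d(u; x^2) + F_d(v; x^2) + d (x^u - x^v)^2, and for y_i = x_i^2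
    2k F_{k+1}(e; y) = 2 \<Sum>_i e_i y_i F_k(e - \<epsilon>_i; y) + \<Sum>_{i,j} e_i e_j (y_i - y_j)(y_i^k - y_j^k)
  drives an induction on k: each (y_i - y_j)(y_i^k - y_j^k) is (x_i^2 - x_j^2)^2 times a sum of
  squares of monomials.
*)

section \<open>Monomials and sums of squares of binomials\<close>

lemma mono_0 [simp]: "mono 0 \<mu> = 0"
  by (simp add: mono_def)

lemma mono_one: "mono 1 0 = 1"
  by (simp add: mono_def)

lemma mono_times_mono: "mono a \<alpha> * mono b \<beta> = mono (a * b) (\<alpha> + \<beta>)"
  unfolding mono_def by (rule mult_single)

lemma mono_plus_mono: "mono a \<mu> + mono b \<mu> = mono (a + b) \<mu>"
  unfolding mono_def by (rule single_add[symmetric])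

lemma mono_minus_mono: "mono a \<mu> - mono b \<mu> = mono (a - b) \<mu>"
  unfolding mono_def by (rule single_diff[symmetric])

lemma mono_uminus: "- mono c \<mu> = mono (- c) \<mu>"
  by (simp add: mono_def single_uminus)

lemma of_nat_mult_mono: "of_nat k * mono c \<mu> = mono (real k * c) \<mu>"
  by (simp add: mono_def mult_single flip: single_of_nat)

lemma lookup_mono: "Poly_Mapping.lookup (mono c \<mu>) \<beta> = (if \<beta> = \<mu> then c else 0)"
  by (simp add: mono_def lookup_single when_def)

lemma sum_monos_same_key: "(\<Sum>i\<in>I. mono (c i) \<mu>) = mono (\<Sum>i\<in>I. c i) \<mu>"
  by (induction I rule: infinite_finite_induct) (simp_all add: mono_plus_mono)

lemma prod_monos: "(\<Prod>i\<in>I. mono (c i) (\<mu> i)) = mono (\<Prod>i\<in>I. c i) (\<Sum>i\<in>I. \<mu> i)"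
  by (induction I rule: infinite_finite_induct) (simp_all add: mono_one mono_times_mono)

lemma mono_power_single:
  "mono c (Poly_Mapping.single i j) ^ k = mono (c ^ k) (Poly_Mapping.single i (j * k))"
  by (induction k) (simp_all add: mono_one mono_times_mono add.commute flip: single_add)

lemma mono_power_const: "mono c 0 ^ k = mono (c ^ k) 0"
  by (induction k) (simp_all add: mono_one mono_times_mono)

lemma sum_single_lookup:
  fixes \<alpha> :: "nat \<Rightarrow>\<^sub>0 nat"
  assumes "Poly_Mapping.keys \<alpha> \<subseteq> {..<n}"
  shows "(\<Sum>i<n. Poly_Mapping.single i (Poly_Mapping.lookup \<alpha> i)) = \<alpha>"
proof (rule poly_mapping_eqI)
  fix j
  have "Poly_Mapping.lookup \<alpha> j = 0" if "\<not> j < n"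
    using assms that by (auto simp: in_keys_iff)
  then show "Poly_Mapping.lookup (\<Sum>i<n. Poly_Mapping.single i (Poly_Mapping.lookup \<alpha> i)) j
      = Poly_Mapping.lookup \<alpha> j"
    by (cases "j < n") (simp_all add: lookup_sum lookup_single when_def)
qed

definition is_monomial :: "nat \<Rightarrow> mpoly \<Rightarrow> bool" where
  "is_monomial n w \<longleftrightarrow> (\<exists>c \<mu>. Poly_Mapping.keys \<mu> \<subseteq> {..<n} \<and> w = mono c \<mu>)"

lemma is_monomialI: "Poly_Mapping.keys \<mu> \<subseteq> {..<n} \<Longrightarrow> is_monomial n (mono c \<mu>)"
  unfolding is_monomial_def by blast

lemma is_monomial_1: "is_monomial n 1"
  using is_monomialI[of 0 n 1] by (simp add: mono_one)

lemma is_monomial_mult: "is_monomial n w \<Longrightarrow> is_monomial n v \<Longrightarrow> is_monomial n (w * v)"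
  unfolding is_monomial_def using keys_add by (fastforce simp: mono_times_mono)

lemma is_monomial_power: "is_monomial n w \<Longrightarrow> is_monomial n (w ^ k)"
  by (induction k) (simp_all add: is_monomial_1 is_monomial_mult)

lemma is_monomial_prod: "(\<And>i. i \<in> I \<Longrightarrow> is_monomial n (w i)) \<Longrightarrow> is_monomial n (\<Prod>i\<in>I. w i)"
  by (induction I rule: infinite_finite_induct) (simp_all add: is_monomial_1 is_monomial_mult)

lemma SOBS_0: "SOBS n 0"
  unfolding SOBS_def by (intro exI[of _ "[]"]) simp

lemma SOBS_add: "SOBS n g \<Longrightarrow> SOBS n h \<Longrightarrow> SOBS n (g + h)"
  unfolding SOBS_def by (metis (no_types, lifting) Un_iff set_append sum_list_append map_append)

lemma SOBS_sum: "(\<And>i. i \<in> I \<Longrightarrow> SOBS n (g i)) \<Longrightarrow> SOBS n (\<Sum>i\<in>I. g i)"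
  by (induction I rule: infinite_finite_induct) (auto simp: SOBS_0 SOBS_add)

lemma SOBS_of_nat_mult: "SOBS n g \<Longrightarrow> SOBS n (of_nat k * g)"
  by (induction k) (auto simp: SOBS_0 SOBS_add algebra_simps)

lemma SOBS_binomial_square:
  assumes "is_monomial n w" "is_monomial n v"
  shows "SOBS n ((w - v) * (w - v))"
proof -
  obtain c \<mu> c' \<mu>' where "Poly_Mapping.keys \<mu> \<subseteq> {..<n}" "w = mono c \<mu>"
    "Poly_Mapping.keys \<mu>' \<subseteq> {..<n}" "v = mono c' \<mu>'"
    using assms unfolding is_monomial_def by blast
  then show ?thesis
    unfolding SOBS_def by (intro exI[of _ "[(c, \<mu>, c', \<mu>')]"]) auto
qed

lemma SOBS_square: "is_monomial n w \<Longrightarrow> SOBS n (w * w)"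
  using SOBS_binomial_square[of n w 0] is_monomialI[of 0 n 0] by simp

lemma SOBS_mult_square:
  assumes "is_monomial n w" "SOBS n g"
  shows "SOBS n (w * w * g)"
proof -
  obtain c \<mu> where w: "Poly_Mapping.keys \<mu> \<subseteq> {..<n}" "w = mono c \<mu>"
    using assms(1) unfolding is_monomial_def by blast
  obtain L where L: "\<forall>(a, \<alpha>, b, \<beta>)\<in>set L. Poly_Mapping.keys \<alpha> \<subseteq> {..<n} \<and> Poly_Mapping.keys \<beta> \<subseteq> {..<n}"
    "g = (\<Sum>(a, \<alpha>, b, \<beta>)\<leftarrow>L. (mono a \<alpha> - mono b \<beta>) * (mono a \<alpha> - mono b \<beta>))"
    using assms(2) unfolding SOBS_def by blast
  define M where "M = map (\<lambda>(a, \<alpha>, b, \<beta>). (c * a, \<mu> + \<alpha>, c * b, \<mu> + \<beta>)) L"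
  have "w * w * g = (\<Sum>(a, \<alpha>, b, \<beta>)\<leftarrow>M. (mono a \<alpha> - mono b \<beta>) * (mono a \<alpha> - mono b \<beta>))"
    unfolding M_def L(2) w(2) by (induction L) (auto simp: algebra_simps mono_times_mono)
  moreover have "\<forall>(a, \<alpha>, b, \<beta>)\<in>set M. Poly_Mapping.keys \<alpha> \<subseteq> {..<n} \<and> Poly_Mapping.keys \<beta> \<subseteq> {..<n}"
    using L(1) w(1) unfolding M_def by (auto dest!: subsetD[OF keys_add])
  ultimately show ?thesis
    unfolding SOBS_def by blast
qed

lemma SOBS_of_nat_mult_cancel:
  assumes "0 < k" "SOBS n (of_nat k * g)"
  shows "SOBS n g"
proof -
  let ?w = "mono (sqrt (1 / real k)) 0"
  have "of_nat k * (?w * ?w) = 1"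
    using assms(1) by (simp add: mono_times_mono of_nat_mult_mono mono_one)
  then have "g = ?w * ?w * (of_nat k * g)"
    by (simp add: ac_simps)
  also have "SOBS n \<dots>"
    by (intro SOBS_mult_square is_monomialI assms(2)) simp
  finally show ?thesis .
qed

lemma SOBS_even_monomial:
  assumes "Poly_Mapping.keys \<gamma> \<subseteq> {..<n}" "\<forall>i<n. even (Poly_Mapping.lookup \<gamma> i)" "0 \<le> c"
  shows "SOBS n (mono c \<gamma>)"
proof -
  define \<eta> where "\<eta> = Poly_Mapping.map (\<lambda>x. x div 2) \<gamma>"
  have lookup_\<eta>: "Poly_Mapping.lookup \<eta> i = Poly_Mapping.lookup \<gamma> i div 2" for i
    unfolding \<eta>_def by (simp add: map.rep_eq when_def)
  have "Poly_Mapping.lookup \<gamma> i = 0" if "\<not> i < n" for i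
    using assms(1) that by (auto simp: in_keys_iff)
  then have "\<eta> + \<eta> = \<gamma>"
    using assms(2) by (intro poly_mapping_eqI) (metis lookup_add lookup_\<eta> div_0 add_0 even_two_times_div_two mult_2)
  moreover have "Poly_Mapping.keys \<eta> \<subseteq> Poly_Mapping.keys \<gamma>"
    by (auto simp: in_keys_iff lookup_\<eta>)
  ultimately show ?thesis
    using SOBS_square[of n "mono (sqrt c) \<eta>"] assms(1,3) by (simp add: is_monomialI mono_times_mono)
qed

section \<open>Hurwitz's AM-GM form\<close>

definition agm_gap :: "nat \<Rightarrow> (nat \<Rightarrow> nat) \<Rightarrow> (nat \<Rightarrow> 'a::comm_ring_1) \<Rightarrow> nat \<Rightarrow> 'a" where
  "agm_gap m e x k = (\<Sum>i<m. of_nat (e i) * x i ^ k) - of_nat k * (\<Prod>i<m. x i ^ e i)"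

lemma agm_gap_1:
  assumes "(\<Sum>i<m. e i) = 1"
  shows "agm_gap m e x 1 = 0"
proof -
  obtain j where j: "j < m" "e j \<noteq> 0"
    using assms by (metis lessThan_iff sum.neutral zero_neq_one)
  then have "(\<Sum>i<m. e i) = e j + (\<Sum>i\<in>{..<m} - {j}. e i)"
    by (simp add: sum.remove)
  then have "e j = 1" and "(\<Sum>i\<in>{..<m} - {j}. e i) = 0"
    using assms j(2) by linarith+
  then have e: "e i = (if i = j then 1 else 0)" if "i < m" for i
    using that by auto
  have "(\<Sum>i<m. of_nat (e i) * x i ^ 1) = (\<Sum>i<m. if i = j then x i else 0)"
    by (rule sum.cong) (simp_all add: e)
  moreover have "(\<Prod>i<m. x i ^ e i) = (\<Prod>i<m. if i = j then x i else 1)"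
    by (rule prod.cong) (simp_all add: e)
  ultimately show ?thesis
    using j(1) by (simp add: agm_gap_def)
qed

lemma sum_fun_upd_decr:
  fixes e :: "nat \<Rightarrow> nat"
  assumes "i < m" "0 < e i"
  shows "(\<Sum>j<m. (e(i := e i - 1)) j) = (\<Sum>j<m. e j) - 1"
  using assms by (simp add: sum.remove[of "{..<m}" i])

lemma sum_of_nat_fun_upd_decr:
  fixes X :: "nat \<Rightarrow> 'a::comm_ring_1"
  assumes "i < m" "0 < e i"
  shows "(\<Sum>j<m. of_nat ((e(i := e i - 1)) j) * X j) = (\<Sum>j<m. of_nat (e j) * X j) - X i"
  using assms by (simp add: sum.remove[of "{..<m}" i] algebra_simps)

lemma prod_power_fun_upd_decr:
  fixes x :: "nat \<Rightarrow> 'a::comm_monoid_mult"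
  assumes "i < m" "0 < e i"
  shows "x i * (\<Prod>j<m. x j ^ (e(i := e i - 1)) j) = (\<Prod>j<m. x j ^ e j)"
  using assms by (cases "e i") (simp_all add: prod.remove[of "{..<m}" i] mult.assoc)

lemma sum_weighted_agm_gap_decr:
  fixes x :: "nat \<Rightarrow> 'a::comm_ring_1"
  assumes "(\<Sum>i<m. e i) = Suc k"
  shows "(\<Sum>i<m. of_nat (e i) * x i * agm_gap m (e(i := e i - 1)) x k)
    = (\<Sum>i<m. of_nat (e i) * x i) * (\<Sum>i<m. of_nat (e i) * x i ^ k)
      - (\<Sum>i<m. of_nat (e i) * x i ^ Suc k) - of_nat k * of_nat (Suc k) * (\<Prod>i<m. x i ^ e i)"
proof -
  define S where "S j = (\<Sum>i<m. of_nat (e i) * x i ^ j)" for j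
  define P where "P = (\<Prod>i<m. x i ^ e i)"
  have summand: "of_nat (e i) * x i * agm_gap m (e(i := e i - 1)) x k
      = of_nat (e i) * x i * S k - of_nat (e i) * x i ^ Suc k - of_nat k * (of_nat (e i) * P)"
    if "i < m" for i
  proof (cases "e i = 0")
    case False
    define Q where "Q = (\<Prod>j<m. x j ^ (e(i := e i - 1)) j)"
    have gap: "agm_gap m (e(i := e i - 1)) x k = S k - x i ^ k - of_nat k * Q"
      using sum_of_nat_fun_upd_decr[OF that, of e "\<lambda>j. x j ^ k"] False
      by (simp add: agm_gap_def S_def Q_def)
    have "of_nat (e i) * x i * agm_gap m (e(i := e i - 1)) x k
        = of_nat (e i) * x i * S k - of_nat (e i) * x i ^ Suc k - of_nat k * (of_nat (e i) * (x i * Q))"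
      unfolding gap by (simp add: algebra_simps)
    also have "x i * Q = P"
      using prod_power_fun_upd_decr[OF that] False by (simp add: P_def Q_def)
    finally show ?thesis .
  qed simp
  have "(\<Sum>i<m. of_nat (e i) * x i * agm_gap m (e(i := e i - 1)) x k)
      = (\<Sum>i<m. of_nat (e i) * x i * S k - of_nat (e i) * x i ^ Suc k - of_nat k * (of_nat (e i) * P))"
    by (rule sum.cong[OF refl], rule summand) simp
  also have "\<dots> = (\<Sum>i<m. of_nat (e i) * x i) * S k - S (Suc k) - of_nat k * (of_nat (\<Sum>i<m. e i) * P)"
    by (simp only: S_def[of "Suc k"] sum_subtractf sum_distrib_left sum_distrib_right of_nat_sum)
  finally show ?thesis
    by (simp add: assms S_def P_def mult.assoc)
qed

lemma sum_pairs_diff_mult_power_diff: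
  fixes x :: "nat \<Rightarrow> 'a::comm_ring_1"
  shows "(\<Sum>i<m. \<Sum>j<m. of_nat (e i * e j) * ((x i - x j) * (x i ^ k - x j ^ k)))
    = 2 * (of_nat (\<Sum>i<m. e i) * (\<Sum>i<m. of_nat (e i) * x i ^ Suc k)
      - (\<Sum>i<m. of_nat (e i) * x i) * (\<Sum>i<m. of_nat (e i) * x i ^ k))"
proof -
  have "(\<Sum>i<m. \<Sum>j<m. of_nat (e i * e j) * ((x i - x j) * (x i ^ k - x j ^ k)))
      = (\<Sum>i<m. \<Sum>j<m. of_nat (e i) * x i ^ Suc k * of_nat (e j)
          + of_nat (e i) * (of_nat (e j) * x j ^ Suc k)
          - of_nat (e i) * x i * (of_nat (e j) * x j ^ k)
          - of_nat (e i) * x i ^ k * (of_nat (e j) * x j))"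
    by (simp add: algebra_simps)
  also have "\<dots> = (\<Sum>i<m. of_nat (e i) * x i ^ Suc k) * (\<Sum>j<m. of_nat (e j))
      + (\<Sum>i<m. of_nat (e i)) * (\<Sum>j<m. of_nat (e j) * x j ^ Suc k)
      - (\<Sum>i<m. of_nat (e i) * x i) * (\<Sum>j<m. of_nat (e j) * x j ^ k)
      - (\<Sum>i<m. of_nat (e i) * x i ^ k) * (\<Sum>j<m. of_nat (e j) * x j)"
    by (simp only: sum.distrib sum_subtractf sum_product)
  finally show ?thesis
    by (simp add: algebra_simps)
qed

lemma agm_gap_Suc:
  fixes x :: "nat \<Rightarrow> 'a::comm_ring_1"
  assumes "(\<Sum>i<m. e i) = Suc k"
  shows "of_nat (2 * k) * agm_gap m e x (Suc k)
    = 2 * (\<Sum>i<m. of_nat (e i) * x i * agm_gap m (e(i := e i - 1)) x k)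
      + (\<Sum>i<m. \<Sum>j<m. of_nat (e i * e j) * ((x i - x j) * (x i ^ k - x j ^ k)))"
  unfolding sum_weighted_agm_gap_decr[OF assms] sum_pairs_diff_mult_power_diff assms
  by (simp add: agm_gap_def algebra_simps)

lemma agm_gap_double:
  fixes x :: "nat \<Rightarrow> 'a::comm_ring_1"
  assumes "\<forall>i<m. u i + v i = e i"
  shows "agm_gap m e x (2 * k)
    = agm_gap m u (\<lambda>i. x i * x i) k + agm_gap m v (\<lambda>i. x i * x i) k
      + of_nat k * ((\<Prod>i<m. x i ^ u i) - (\<Prod>i<m. x i ^ v i))\<^sup>2"
proof -
  have "(\<Sum>i<m. of_nat (e i) * x i ^ (2 * k))
      = (\<Sum>i<m. of_nat (u i) * (x i * x i) ^ k) + (\<Sum>i<m. of_nat (v i) * (x i * x i) ^ k)"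
    unfolding sum.distrib[symmetric]
    by (rule sum.cong) (simp_all add: power_mult power2_eq_square distrib_right flip: assms[rule_format])
  moreover have "(\<Prod>i<m. x i ^ e i) = (\<Prod>i<m. x i ^ u i) * (\<Prod>i<m. x i ^ v i)"
    unfolding prod.distrib[symmetric]
    by (rule prod.cong) (simp_all add: flip: power_add assms[rule_format])
  moreover have "(\<Prod>i<m. (x i * x i) ^ w i) = (\<Prod>i<m. x i ^ w i)\<^sup>2" for w
    by (simp add: power_mult_distrib prod.distrib power2_eq_square)
  ultimately show ?thesis
    by (simp add: agm_gap_def power2_eq_square algebra_simps)
qed

lemma SOBS_diff_squares_mult_power_diff:
  assumes "is_monomial n u" "is_monomial n v"
  shows "SOBS n ((u * u - v * v) * ((u * u) ^ k - (v * v) ^ k))"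
proof -
  define w where "w l = v ^ (k - Suc l) * u ^ l" for l
  have "(u * u) ^ k - (v * v) ^ k = (u * u - v * v) * (\<Sum>l<k. (v * v) ^ (k - Suc l) * (u * u) ^ l)"
    by (rule power_diff_sumr2)
  then have "(u * u - v * v) * ((u * u) ^ k - (v * v) ^ k)
      = (\<Sum>l<k. w l * w l * ((u * u - v * v) * (u * u - v * v)))"
    by (simp add: w_def sum_distrib_left power_mult_distrib ac_simps)
  also have "SOBS n \<dots>"
    using assms by (intro SOBS_sum SOBS_mult_square SOBS_binomial_square)
      (simp_all add: w_def is_monomial_mult is_monomial_power)
  finally show ?thesis .
qed

lemma SOBS_agm_gap_squares:
  assumes "\<forall>i<m. is_monomial n (s i)" "(\<Sum>i<m. e i) = k" "0 < k"
  shows "SOBS n (agm_gap m e (\<lambda>i. s i * s i) k)"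
  using assms(3,2)
proof (induction k arbitrary: e rule: nat_induct_non_zero)
  case 1
  then have "agm_gap m e (\<lambda>i. s i * s i) 1 = 0"
    by (intro agm_gap_1)
  then show ?case
    by (simp add: SOBS_0)
next
  case (Suc k)
  let ?x = "\<lambda>i. s i * s i"
  define G where "G = (\<Sum>i<m. of_nat (e i) * ?x i * agm_gap m (e(i := e i - 1)) ?x k)"
  define C where "C = (\<Sum>i<m. \<Sum>j<m. of_nat (e i * e j) * ((?x i - ?x j) * (?x i ^ k - ?x j ^ k)))"
  have "SOBS n (of_nat (e i) * ?x i * agm_gap m (e(i := e i - 1)) ?x k)" if "i < m" for i
  proof (cases "e i = 0")
    case False
    then have "SOBS n (agm_gap m (e(i := e i - 1)) ?x k)"
      using Suc.IH sum_fun_upd_decr[OF that] Suc.prems by simp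
    then show ?thesis
      using SOBS_of_nat_mult SOBS_mult_square assms(1) that by (simp add: mult.assoc)
  qed (simp add: SOBS_0)
  then have "SOBS n G"
    unfolding G_def by (intro SOBS_sum) simp
  moreover have "SOBS n C"
    unfolding C_def using assms(1)
    by (intro SOBS_sum SOBS_of_nat_mult SOBS_diff_squares_mult_power_diff) auto
  ultimately have "SOBS n (G + G + C)"
    by (intro SOBS_add)
  moreover have "of_nat (2 * k) * agm_gap m e ?x (Suc k) = G + G + C"
    unfolding agm_gap_Suc[OF Suc.prems] G_def C_def by (simp only: mult_2)
  ultimately have "SOBS n (of_nat (2 * k) * agm_gap m e ?x (Suc k))"
    by simp
  then show ?case
    by (rule SOBS_of_nat_mult_cancel[rotated]) (use Suc.hyps in simp)
qed

lemma exists_le_sum_eq: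
  fixes e :: "nat \<Rightarrow> nat"
  assumes "k \<le> (\<Sum>i<m. e i)"
  shows "\<exists>u. (\<forall>i. u i \<le> e i) \<and> (\<Sum>i<m. u i) = k"
  using assms
proof (induction m arbitrary: k)
  case 0
  then show ?case
    by (intro exI[of _ "\<lambda>_. 0"]) simp
next
  case (Suc m)
  show ?case
  proof (cases "k \<le> (\<Sum>i<m. e i)")
    case True
    then obtain u where "\<forall>i. u i \<le> e i" "(\<Sum>i<m. u i) = k"
      using Suc.IH by blast
    then show ?thesis
      by (intro exI[of _ "u(m := 0)"]) simp
  next
    case False
    then show ?thesis
      using Suc.prems by (intro exI[of _ "e(m := k - (\<Sum>i<m. e i))"]) simp
  qed
qed

lemma SOBS_agm_gap:
  assumes "\<forall>i<m. is_monomial n (s i)" "(\<Sum>i<m. e i) = 2 * k" "0 < k"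
  shows "SOBS n (agm_gap m e s (2 * k))"
proof -
  obtain u where u: "\<forall>i. u i \<le> e i" "(\<Sum>i<m. u i) = k"
    using exists_le_sum_eq[where k = k and m = m and e = e] assms(2) by auto
  define v where "v i = e i - u i" for i
  have uv: "\<forall>i<m. u i + v i = e i"
    using u(1) by (simp add: v_def)
  have "(\<Sum>i<m. v i) = k"
    using u assms(2) by (simp add: v_def sum_subtractf_nat)
  then show ?thesis
    unfolding agm_gap_double[OF uv] power2_eq_square
    using assms u by (intro SOBS_add SOBS_of_nat_mult SOBS_agm_gap_squares SOBS_binomial_square
        is_monomial_prod is_monomial_power) auto
qed

section \<open>Circuit polynomials\<close>

lemma tdeg_eq_sum:
  assumes "Poly_Mapping.keys \<alpha> \<subseteq> {..<n}"
  shows "tdeg \<alpha> = (\<Sum>i<n. Poly_Mapping.lookup \<alpha> i)"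
  unfolding tdeg_def using assms by (intro sum.mono_neutral_left) (auto simp: in_keys_iff)

lemma SOBS_agm_circuit:
  fixes \<alpha> :: "nat \<Rightarrow>\<^sub>0 nat" and lam :: "nat \<Rightarrow> real"
  assumes keys: "Poly_Mapping.keys \<alpha> \<subseteq> {..<n}" and deg: "tdeg \<alpha> + k = 2 * d" and "0 < d"
  shows "SOBS n ((\<Sum>i<n. mono (real (Poly_Mapping.lookup \<alpha> i) * lam i ^ (2 * d)) (pure (2 * d) i))
    + mono (real k * lam0 ^ (2 * d)) 0
    - mono (real (2 * d) * (\<Prod>i<n. lam i ^ Poly_Mapping.lookup \<alpha> i) * lam0 ^ k) \<alpha>)"
proof -
  define s where "s i = (if i < n then mono (lam i) (Poly_Mapping.single i 1) else mono lam0 0)" for i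
  define e where "e i = (if i < n then Poly_Mapping.lookup \<alpha> i else k)" for i
  have "(\<Sum>i<Suc n. e i) = 2 * d"
    using deg tdeg_eq_sum[OF keys] by (simp add: e_def)
  then have "SOBS n (agm_gap (Suc n) e s (2 * d))"
    using \<open>0 < d\<close> by (intro SOBS_agm_gap) (auto simp: s_def is_monomialI)
  moreover have sum_eq: "(\<Sum>i<Suc n. of_nat (e i) * s i ^ (2 * d))
      = (\<Sum>i<n. mono (real (Poly_Mapping.lookup \<alpha> i) * lam i ^ (2 * d)) (pure (2 * d) i))
        + mono (real k * lam0 ^ (2 * d)) 0"
    by (simp add: s_def e_def mono_power_single mono_power_const of_nat_mult_mono pure_def)
  moreover have prod_eq: "(\<Prod>i<Suc n. s i ^ e i)
      = mono ((\<Prod>i<n. lam i ^ Poly_Mapping.lookup \<alpha> i) * lam0 ^ k) \<alpha>"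
    by (simp add: s_def e_def mono_power_single mono_power_const prod_monos mono_times_mono
        sum_single_lookup[OF keys])
  ultimately show ?thesis
    unfolding agm_gap_def sum_eq prod_eq of_nat_mult_mono by (simp only: mult.assoc)
qed

lemma SOBS_signed_agm_circuit:
  fixes \<alpha> :: "nat \<Rightarrow>\<^sub>0 nat" and lam :: "nat \<Rightarrow> real"
  assumes keys: "Poly_Mapping.keys \<alpha> \<subseteq> {..<n}" and deg: "tdeg \<alpha> + k = 2 * d" and d: "0 < d"
    and sign: "c < 0 \<or> (\<exists>j<n. odd (Poly_Mapping.lookup \<alpha> j))"
    and balance: "real (2 * d) * (\<Prod>i<n. lam i ^ Poly_Mapping.lookup \<alpha> i) * lam0 ^ k = \<bar>c\<bar>"
  shows "SOBS n ((\<Sum>i<n. mono (real (Poly_Mapping.lookup \<alpha> i) * lam i ^ (2 * d)) (pure (2 * d) i))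
    + mono (real k * lam0 ^ (2 * d)) 0 + mono c \<alpha>)"
proof -
  have "\<exists>\<mu>. (\<forall>i. \<mu> i ^ (2 * d) = lam i ^ (2 * d))
      \<and> real (2 * d) * (\<Prod>i<n. \<mu> i ^ Poly_Mapping.lookup \<alpha> i) * lam0 ^ k = - c"
  proof (cases "c < 0")
    case True
    then show ?thesis
      using balance by (intro exI[of _ lam]) simp
  next
    case False
    then obtain j where j: "j < n" "odd (Poly_Mapping.lookup \<alpha> j)"
      using sign by blast
    define \<mu> where "\<mu> = lam(j := - lam j)"
    have "(\<Prod>i<n. \<mu> i ^ Poly_Mapping.lookup \<alpha> i) = - (\<Prod>i<n. lam i ^ Poly_Mapping.lookup \<alpha> i)"
      using j by (simp add: \<mu>_def prod.remove[of "{..<n}" j])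
    then show ?thesis
      using balance False by (intro exI[of _ \<mu>]) (simp add: \<mu>_def)
  qed
  then obtain \<mu> where \<mu>: "\<forall>i. \<mu> i ^ (2 * d) = lam i ^ (2 * d)"
    and "real (2 * d) * (\<Prod>i<n. \<mu> i ^ Poly_Mapping.lookup \<alpha> i) * lam0 ^ k = - c"
    by blast
  then have "mono (real (2 * d) * (\<Prod>i<n. \<mu> i ^ Poly_Mapping.lookup \<alpha> i) * lam0 ^ k) \<alpha> = - mono c \<alpha>"
    by (simp add: mono_uminus)
  then show ?thesis
    using SOBS_agm_circuit[OF keys deg d, of \<mu> lam0] by (simp add: \<mu>)
qed

lemma vpow_pos:
  assumes "\<forall>i<n. 0 \<le> a i" "\<forall>i<n. a i = 0 \<longrightarrow> Poly_Mapping.lookup \<alpha> i = 0"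
  shows "0 < vpow n a \<alpha>"
  unfolding vpow_def
proof (rule prod_pos)
  fix i
  assume "i \<in> {..<n}"
  then have "0 < a i \<or> Poly_Mapping.lookup \<alpha> i = 0"
    using assms by (auto simp: order.order_iff_strict)
  then show "0 < a i ^ Poly_Mapping.lookup \<alpha> i"
    by auto
qed

lemma exists_circuit_weights:
  fixes \<alpha> :: "nat \<Rightarrow>\<^sub>0 nat" and a :: "nat \<Rightarrow> real"
  assumes "0 < D" "\<forall>i<n. 0 \<le> a i" "\<forall>i<n. a i = 0 \<longleftrightarrow> Poly_Mapping.lookup \<alpha> i = 0"
  shows "\<exists>lam. (\<forall>i<n. real (Poly_Mapping.lookup \<alpha> i) * lam i ^ D = a i)
    \<and> 0 < (\<Prod>i<n. lam i ^ Poly_Mapping.lookup \<alpha> i)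
    \<and> (\<Prod>i<n. lam i ^ Poly_Mapping.lookup \<alpha> i) ^ D
        = vpow n a \<alpha> / vpow n (\<lambda>i. real (Poly_Mapping.lookup \<alpha> i)) \<alpha>"
proof -
  define lam where "lam i = root D (a i / real (Poly_Mapping.lookup \<alpha> i))" for i
  have lam_pow: "lam i ^ D = a i / real (Poly_Mapping.lookup \<alpha> i)" if "i < n" for i
    using assms that by (simp add: lam_def)
  define L where "L = (\<Prod>i<n. lam i ^ Poly_Mapping.lookup \<alpha> i)"
  have "L ^ D = (\<Prod>i<n. (lam i ^ D) ^ Poly_Mapping.lookup \<alpha> i)"
    by (simp add: L_def prod_power_distrib mult.commute flip: power_mult)
  also have "\<dots> = vpow n a \<alpha> / vpow n (\<lambda>i. real (Poly_Mapping.lookup \<alpha> i)) \<alpha>"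
    unfolding vpow_def prod_dividef[symmetric] by (rule prod.cong) (simp_all add: lam_pow power_divide)
  finally have L_pow: "L ^ D = vpow n a \<alpha> / vpow n (\<lambda>i. real (Poly_Mapping.lookup \<alpha> i)) \<alpha>" .
  moreover have "0 < L ^ D"
    unfolding L_pow using assms by (intro divide_pos_pos vpow_pos) auto
  moreover have "0 \<le> L"
    using assms unfolding L_def lam_def by (intro prod_nonneg zero_le_power real_root_ge_zero) auto
  ultimately have "0 < L"
    using \<open>0 < D\<close> by (metis le_less zero_power)
  moreover have "\<forall>i<n. real (Poly_Mapping.lookup \<alpha> i) * lam i ^ D = a i"
    using assms by (simp add: lam_pow)
  ultimately show ?thesis
    using L_pow unfolding L_def by blast
qed

(* b_\<alpha>, with f_\<alpha> = c.  The factor 2d - |\<alpha>| makes it 0 when |\<alpha>| = 2d, where the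
   exponent 1/0 is junk. *)
definition circuit_const :: "nat \<Rightarrow> nat \<Rightarrow> (nat \<Rightarrow> real) \<Rightarrow> real \<Rightarrow> (nat \<Rightarrow>\<^sub>0 nat) \<Rightarrow> real" where
  "circuit_const n d a c \<alpha> =
     real (2 * d - tdeg \<alpha>) *
     ((\<bar>c\<bar> ^ (2 * d) * vpow n (\<lambda>i. real (Poly_Mapping.lookup \<alpha> i)) \<alpha>)
       / (real (2 * d) ^ (2 * d) * vpow n a \<alpha>))
     powr (1 / real (2 * d - tdeg \<alpha>))"

lemma exists_circuit_scale:
  fixes L :: real
  assumes d: "0 < d" and "c \<noteq> 0" and "tdeg \<alpha> \<le> 2 * d" and "0 < L"
    and A: "0 < vpow n a \<alpha>" and N: "0 < vpow n (\<lambda>i. real (Poly_Mapping.lookup \<alpha> i)) \<alpha>"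
    and L_pow: "L ^ (2 * d) = vpow n a \<alpha> / vpow n (\<lambda>i. real (Poly_Mapping.lookup \<alpha> i)) \<alpha>"
    and top: "tdeg \<alpha> = 2 * d \<Longrightarrow>
      real (2 * d) ^ (2 * d) * vpow n a \<alpha> = \<bar>c\<bar> ^ (2 * d) * vpow n (\<lambda>i. real (Poly_Mapping.lookup \<alpha> i)) \<alpha>"
  shows "\<exists>t. real (2 * d) * L * t ^ (2 * d - tdeg \<alpha>) = \<bar>c\<bar>
    \<and> real (2 * d - tdeg \<alpha>) * t ^ (2 * d) = circuit_const n d a c \<alpha>"
proof (cases "tdeg \<alpha> = 2 * d")
  case True
  have "L ^ (2 * d) * real (2 * d) ^ (2 * d)
      = real (2 * d) ^ (2 * d) * vpow n a \<alpha> / vpow n (\<lambda>i. real (Poly_Mapping.lookup \<alpha> i)) \<alpha>"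
    by (simp add: L_pow)
  also have "\<dots> = \<bar>c\<bar> ^ (2 * d)"
    unfolding top[OF True] using N by simp
  finally have "L ^ (2 * d) = (\<bar>c\<bar> / real (2 * d)) ^ (2 * d)"
    using d by (simp add: field_simps)
  then have "L = \<bar>c\<bar> / real (2 * d)"
    by (rule power_eq_imp_eq_base) (use \<open>0 < L\<close> d in auto)
  then show ?thesis
    using True d by (intro exI[of _ 1]) (simp add: circuit_const_def)
next
  case False
  define k where "k = 2 * d - tdeg \<alpha>"
  define x where "x = \<bar>c\<bar> / (real (2 * d) * L)"
  have "0 < k" "0 < x"
    using False assms by (auto simp: k_def x_def)
  have "root k x ^ (2 * d) = root k (x ^ (2 * d))"
    using \<open>0 < k\<close> by (simp add: real_root_power)
  also have "\<dots> = (x ^ (2 * d)) powr (1 / real k)"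
    using \<open>0 < k\<close> \<open>0 < x\<close> by (simp add: root_powr_inverse)
  also have "x ^ (2 * d) = (\<bar>c\<bar> ^ (2 * d) * vpow n (\<lambda>i. real (Poly_Mapping.lookup \<alpha> i)) \<alpha>)
      / (real (2 * d) ^ (2 * d) * vpow n a \<alpha>)"
    unfolding x_def power_divide power_mult_distrib L_pow using A N by (simp add: field_simps)
  finally have "root k x ^ (2 * d) = circuit_const n d a c \<alpha> / real k"
    using \<open>0 < k\<close> by (simp add: circuit_const_def k_def)
  moreover have "real (2 * d) * L * root k x ^ k = \<bar>c\<bar>"
    using \<open>0 < k\<close> \<open>0 < x\<close> \<open>0 < L\<close> d by (simp add: x_def)
  ultimately show ?thesis
    using \<open>0 < k\<close> by (intro exI[of _ "root k x"]) (simp add: k_def)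
qed

lemma SOBS_circuit:
  fixes \<alpha> :: "nat \<Rightarrow>\<^sub>0 nat" and a :: "nat \<Rightarrow> real"
  assumes keys: "Poly_Mapping.keys \<alpha> \<subseteq> {..<n}" and deg: "tdeg \<alpha> \<le> 2 * d" and d: "0 < d"
    and "c \<noteq> 0" and sign: "c < 0 \<or> (\<exists>j<n. odd (Poly_Mapping.lookup \<alpha> j))"
    and a_nonneg: "\<forall>i<n. 0 \<le> a i" and a_zero: "\<forall>i<n. a i = 0 \<longleftrightarrow> Poly_Mapping.lookup \<alpha> i = 0"
    and top: "tdeg \<alpha> = 2 * d \<Longrightarrow>
      real (2 * d) ^ (2 * d) * vpow n a \<alpha> = \<bar>c\<bar> ^ (2 * d) * vpow n (\<lambda>i. real (Poly_Mapping.lookup \<alpha> i)) \<alpha>"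
  shows "SOBS n ((\<Sum>i<n. mono (a i) (pure (2 * d) i)) + mono (circuit_const n d a c \<alpha>) 0 + mono c \<alpha>)"
proof -
  obtain lam where weights: "\<forall>i<n. real (Poly_Mapping.lookup \<alpha> i) * lam i ^ (2 * d) = a i"
    and L_pos: "0 < (\<Prod>i<n. lam i ^ Poly_Mapping.lookup \<alpha> i)"
    and L_pow: "(\<Prod>i<n. lam i ^ Poly_Mapping.lookup \<alpha> i) ^ (2 * d)
      = vpow n a \<alpha> / vpow n (\<lambda>i. real (Poly_Mapping.lookup \<alpha> i)) \<alpha>"
    using exists_circuit_weights[where D = "2 * d" and n = n and a = a and \<alpha> = \<alpha>] d a_nonneg a_zero
    by auto
  have "0 < vpow n a \<alpha>" "0 < vpow n (\<lambda>i. real (Poly_Mapping.lookup \<alpha> i)) \<alpha>"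
    using a_nonneg a_zero by (auto intro!: vpow_pos)
  then obtain t
    where "real (2 * d) * (\<Prod>i<n. lam i ^ Poly_Mapping.lookup \<alpha> i) * t ^ (2 * d - tdeg \<alpha>) = \<bar>c\<bar>"
      and "real (2 * d - tdeg \<alpha>) * t ^ (2 * d) = circuit_const n d a c \<alpha>"
    using exists_circuit_scale[OF d \<open>c \<noteq> 0\<close> deg L_pos _ _ L_pow top] by blast
  then have "SOBS n ((\<Sum>i<n. mono (real (Poly_Mapping.lookup \<alpha> i) * lam i ^ (2 * d)) (pure (2 * d) i))
      + mono (circuit_const n d a c \<alpha>) 0 + mono c \<alpha>)"
    using SOBS_signed_agm_circuit[OF keys _ d sign, of "2 * d - tdeg \<alpha>" lam t] deg by simp
  then show ?thesis
    using weights by simp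
qed

section \<open>Decomposition of the polynomial\<close>

lemma tdeg_pos: "\<alpha> \<noteq> 0 \<Longrightarrow> 0 < tdeg \<alpha>"
  unfolding tdeg_def by (intro sum_pos) (auto simp: in_keys_iff)

lemma tdeg_le_poly_deg: "\<alpha> \<in> Poly_Mapping.keys f \<Longrightarrow> tdeg \<alpha> \<le> poly_deg f"
  unfolding poly_deg_def by auto

lemma poly_deg_pos: "\<exists>\<alpha>\<in>Poly_Mapping.keys f. \<alpha> \<noteq> 0 \<Longrightarrow> 0 < poly_deg f"
  using tdeg_pos tdeg_le_poly_deg by (metis order.strict_trans2)

lemma pure_eq_iff: "0 < k \<Longrightarrow> pure k i = pure k j \<longleftrightarrow> i = j"
  unfolding pure_def by (metis lookup_single_eq lookup_single_not_eq not_gr0)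

lemma pure_neq_0: "0 < k \<Longrightarrow> pure k i \<noteq> 0"
  unfolding pure_def by (metis lookup_single_eq lookup_zero not_gr0)

lemma Delta_subset_Omega: "Delta n d f \<subseteq> Omega n d f"
  unfolding Delta_def by auto

lemma Omega_subset_keys: "Omega n d f \<subseteq> Poly_Mapping.keys f"
  unfolding Omega_def by auto

lemma finite_Omega: "finite (Omega n d f)"
  using Omega_subset_keys finite_keys by (rule finite_subset)

lemma finite_Delta: "finite (Delta n d f)"
  using Delta_subset_Omega finite_Omega by (rule finite_subset)

lemma poly_eq_sum_Omega:
  assumes "0 < d"
  shows "f = mono (coef f 0) 0 + (\<Sum>i<n. mono (coef f (pure (2 * d) i)) (pure (2 * d) i))
    + (\<Sum>\<beta>\<in>Omega n d f. mono (coef f \<beta>) \<beta>)"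
proof (rule poly_mapping_eqI)
  fix \<beta>
  have "Poly_Mapping.lookup (mono (coef f 0) 0 + (\<Sum>i<n. mono (coef f (pure (2 * d) i)) (pure (2 * d) i))
      + (\<Sum>\<beta>\<in>Omega n d f. mono (coef f \<beta>) \<beta>)) \<beta>
    = (if \<beta> = 0 then coef f 0 else 0)
      + (\<Sum>i<n. if \<beta> = pure (2 * d) i then coef f (pure (2 * d) i) else 0)
      + (if \<beta> \<in> Omega n d f then coef f \<beta> else 0)"
    by (simp add: lookup_add lookup_sum lookup_mono finite_Omega)
  also have "\<dots> = coef f \<beta>"
  proof -
    consider "\<beta> = 0" | j where "j < n" "\<beta> = pure (2 * d) j"
      | "\<beta> \<noteq> 0" "\<forall>i<n. \<beta> \<noteq> pure (2 * d) i"
      by blast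
    then show ?thesis
    proof cases
      case 1
      then show ?thesis
        using assms pure_neq_0[of "2 * d"] by (simp add: Omega_def)
    next
      case 2
      then show ?thesis
        using assms pure_neq_0[of "2 * d"] pure_eq_iff[of "2 * d"] by (auto simp: Omega_def)
    next
      case 3
      then show ?thesis
        by (auto simp: Omega_def coef_def in_keys_iff)
    qed
  qed
  finally show "Poly_Mapping.lookup f \<beta> = Poly_Mapping.lookup (mono (coef f 0) 0
      + (\<Sum>i<n. mono (coef f (pure (2 * d) i)) (pure (2 * d) i))
      + (\<Sum>\<beta>\<in>Omega n d f. mono (coef f \<beta>) \<beta>)) \<beta>"
    by (simp add: coef_def)
qed

lemma sub_const_eq_circuits_plus_remainder:
  fixes a :: "(nat \<Rightarrow>\<^sub>0 nat) \<Rightarrow> nat \<Rightarrow> real" and b :: "(nat \<Rightarrow>\<^sub>0 nat) \<Rightarrow> real"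
  assumes "0 < d"
  shows "f - mono r 0
    = (\<Sum>\<alpha>\<in>Delta n d f. (\<Sum>i<n. mono (a \<alpha> i) (pure (2 * d) i)) + mono (b \<alpha>) 0 + mono (coef f \<alpha>) \<alpha>)
      + (\<Sum>i<n. mono (coef f (pure (2 * d) i) - (\<Sum>\<alpha>\<in>Delta n d f. a \<alpha> i)) (pure (2 * d) i))
      + (\<Sum>\<beta>\<in>Omega n d f - Delta n d f. mono (coef f \<beta>) \<beta>)
      + mono (coef f 0 - r - (\<Sum>\<alpha>\<in>Delta n d f. b \<alpha>)) 0"
proof -
  have "(\<Sum>\<beta>\<in>Omega n d f. mono (coef f \<beta>) \<beta>)
      = (\<Sum>\<alpha>\<in>Delta n d f. mono (coef f \<alpha>) \<alpha>) + (\<Sum>\<beta>\<in>Omega n d f - Delta n d f. mono (coef f \<beta>) \<beta>)"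
    by (simp add: sum.subset_diff[OF Delta_subset_Omega finite_Omega])
  moreover have "(\<Sum>\<alpha>\<in>Delta n d f. \<Sum>i<n. mono (a \<alpha> i) (pure (2 * d) i))
      = (\<Sum>i<n. mono (\<Sum>\<alpha>\<in>Delta n d f. a \<alpha> i) (pure (2 * d) i))"
    by (subst sum.swap) (simp add: sum_monos_same_key)
  moreover have "(\<Sum>i<n. mono (coef f (pure (2 * d) i)) (pure (2 * d) i))
      = (\<Sum>i<n. mono (\<Sum>\<alpha>\<in>Delta n d f. a \<alpha> i) (pure (2 * d) i))
        + (\<Sum>i<n. mono (coef f (pure (2 * d) i) - (\<Sum>\<alpha>\<in>Delta n d f. a \<alpha> i)) (pure (2 * d) i))"
    by (simp add: mono_plus_mono flip: sum.distrib)
  moreover have "mono (coef f 0) 0 - mono r 0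
      = mono (\<Sum>\<alpha>\<in>Delta n d f. b \<alpha>) 0 + mono (coef f 0 - r - (\<Sum>\<alpha>\<in>Delta n d f. b \<alpha>)) 0"
    by (simp add: mono_plus_mono mono_minus_mono)
  moreover have "f - mono r 0 = mono (coef f 0) 0 - mono r 0
      + (\<Sum>i<n. mono (coef f (pure (2 * d) i)) (pure (2 * d) i)) + (\<Sum>\<beta>\<in>Omega n d f. mono (coef f \<beta>) \<beta>)"
    using poly_eq_sum_Omega[OF assms, of f n] by (simp add: algebra_simps)
  ultimately show ?thesis
    by (simp add: sum.distrib sum_monos_same_key algebra_simps)
qed

lemma SOBS_sum_Omega_minus_Delta:
  assumes "in_vars n f"
  shows "SOBS n (\<Sum>\<beta>\<in>Omega n d f - Delta n d f. mono (coef f \<beta>) \<beta>)"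
proof (rule SOBS_sum)
  fix \<beta>
  assume "\<beta> \<in> Omega n d f - Delta n d f"
  then have "\<beta> \<in> Poly_Mapping.keys f" "0 \<le> coef f \<beta>" "\<forall>i<n. even (Poly_Mapping.lookup \<beta> i)"
    by (auto simp: Delta_def Omega_def)
  then show "SOBS n (mono (coef f \<beta>) \<beta>)"
    using assms unfolding in_vars_def by (intro SOBS_even_monomial) auto
qed

lemma SOBS_circuit_of_Delta:
  fixes a :: "nat \<Rightarrow> real"
  assumes vars: "in_vars n f" and deg: "poly_deg f = 2 * d" and "0 < d" and \<alpha>: "\<alpha> \<in> Delta n d f"
    and "\<forall>i<n. 0 \<le> a i" and "\<forall>i<n. a i = 0 \<longleftrightarrow> Poly_Mapping.lookup \<alpha> i = 0"
    and "tdeg \<alpha> = 2 * d \<Longrightarrow> real (2 * d) ^ (2 * d) * vpow n a \<alpha>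
      = \<bar>coef f \<alpha>\<bar> ^ (2 * d) * vpow n (\<lambda>i. real (Poly_Mapping.lookup \<alpha> i)) \<alpha>"
  shows "SOBS n ((\<Sum>i<n. mono (a i) (pure (2 * d) i)) + mono (circuit_const n d a (coef f \<alpha>) \<alpha>) 0
    + mono (coef f \<alpha>) \<alpha>)"
proof -
  from \<alpha> have key: "\<alpha> \<in> Poly_Mapping.keys f"
    and "coef f \<alpha> < 0 \<or> (\<exists>i<n. odd (Poly_Mapping.lookup \<alpha> i))"
    by (auto simp: Delta_def Omega_def)
  moreover have "Poly_Mapping.keys \<alpha> \<subseteq> {..<n}"
    using vars key by (auto simp: in_vars_def)
  moreover have "tdeg \<alpha> \<le> 2 * d"
    using tdeg_le_poly_deg[OF key] deg by simp
  moreover have "coef f \<alpha> \<noteq> 0"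
    using key by (simp add: coef_def in_keys_iff)
  ultimately show ?thesis
    using assms by (intro SOBS_circuit) auto
qed

theorem theorem3p1:
  fixes n d :: nat and f :: mpoly and r :: real
    and a :: "(nat \<Rightarrow>\<^sub>0 nat) \<Rightarrow> nat \<Rightarrow> real"
  assumes vars: "in_vars n f"
    and nonconst: "\<exists>\<alpha>\<in>Poly_Mapping.keys f. \<alpha> \<noteq> 0"
    and deg: "poly_deg f = 2 * d"
    and a_nonneg: "\<forall>\<alpha>\<in>Delta n d f. \<forall>i<n. a \<alpha> i \<ge> 0"
    and a_zero: "\<forall>\<alpha>\<in>Delta n d f. \<forall>i<n. a \<alpha> i = 0 \<longleftrightarrow> Poly_Mapping.lookup \<alpha> i = 0"
    and cond1: "\<forall>\<alpha>\<in>Delta n d f. tdeg \<alpha> = 2 * d \<longrightarrow>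
        real (2 * d) ^ (2 * d) * vpow n (a \<alpha>) \<alpha>
          = \<bar>coef f \<alpha>\<bar> ^ (2 * d) * vpow n (\<lambda>i. real (Poly_Mapping.lookup \<alpha> i)) \<alpha>"
    and cond2: "\<forall>i<n. coef f (pure (2 * d) i) \<ge> (\<Sum>\<alpha>\<in>Delta n d f. a \<alpha> i)"
    and cond3: "coef f 0 - r \<ge>
        (\<Sum>\<alpha>\<in>{\<alpha>\<in>Delta n d f. tdeg \<alpha> < 2 * d}.
           real (2 * d - tdeg \<alpha>) *
           ((\<bar>coef f \<alpha>\<bar> ^ (2 * d) * vpow n (\<lambda>i. real (Poly_Mapping.lookup \<alpha> i)) \<alpha>)
             / (real (2 * d) ^ (2 * d) * vpow n (a \<alpha>) \<alpha>))
           powr (1 / real (2 * d - tdeg \<alpha>)))"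
  shows "SOBS n (f - mono r 0)"
proof -
  let ?\<Delta> = "Delta n d f"
  let ?b = "\<lambda>\<alpha>. circuit_const n d (a \<alpha>) (coef f \<alpha>) \<alpha>"
  have d: "0 < d"
    using poly_deg_pos[OF nonconst] deg by simp
  have circuits: "SOBS n (\<Sum>\<alpha>\<in>?\<Delta>. (\<Sum>i<n. mono (a \<alpha> i) (pure (2 * d) i)) + mono (?b \<alpha>) 0 + mono (coef f \<alpha>) \<alpha>)"
    using vars deg d a_nonneg a_zero cond1 by (intro SOBS_sum SOBS_circuit_of_Delta) auto
  have pure_part: "SOBS n (\<Sum>i<n. mono (coef f (pure (2 * d) i) - (\<Sum>\<alpha>\<in>?\<Delta>. a \<alpha> i)) (pure (2 * d) i))"
    using cond2 by (intro SOBS_sum SOBS_even_monomial) (auto simp: pure_def lookup_single when_def)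
  have "(\<Sum>\<alpha>\<in>?\<Delta>. ?b \<alpha>) = (\<Sum>\<alpha>\<in>{\<alpha>\<in>?\<Delta>. tdeg \<alpha> < 2 * d}. ?b \<alpha>)"
    by (rule sum.mono_neutral_right) (auto simp: finite_Delta circuit_const_def)
  then have const_part: "SOBS n (mono (coef f 0 - r - (\<Sum>\<alpha>\<in>?\<Delta>. ?b \<alpha>)) 0)"
    using cond3 by (intro SOBS_even_monomial) (simp_all add: circuit_const_def)
  show ?thesis
    unfolding sub_const_eq_circuits_plus_remainder[OF d, where f = f and r = r and n = n and a = a and b = ?b]
    by (intro SOBS_add circuits pure_part SOBS_sum_Omega_minus_Delta[OF vars] const_part)
qed

end
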